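(* Let $X$ be a biquandle in which $a\uparrow(b\downarrow c)=a\uparrow b$, $a\Uparrow(b\downarrow c)=a\Uparrow b$, $a\downarrow(b\uparrow c)=a\downarrow b$ and $a\Downarrow(b\uparrow c)=a\Downarrow b$ hold for all $a,b,c\in X$. Then: (1) for all $a,b,c\in X$: $a\uparrow(b\downarrow c)=a\uparrow(b\Downarrow c)=a\uparrow b$, $a\Uparrow(b\downarrow c)=a\Uparrow(b\Downarrow c)=a\Uparrow b$, $a\downarrow(b\uparrow c)=a\downarrow(b\Uparrow c)=a\downarrow b$, $a\Downarrow(b\uparrow c)=a\Downarrow(b\Uparrow c)=a\Downarrow b$; (2) for all $a,b\in X$: $(a\uparrow b)\Uparrow b=(a\Uparrow b)\uparrow b=(a\downarrow b)\Downarrow b=(a\Downarrow b)\downarrow b=a$; (3) every up-type operation commutes with every down-type operation: for all $a,b,c\in X$, $(a\uparrow b)\downarrow c=(a\downarrow c)\uparrow b$, $(a\Uparrow b)\downarrow c=(a\downarrow c)\Uparrow b$, $(a\uparrow b)\Downarrow c=(a\Downarrow c)\uparrow b$, $(a\Uparrow b)\Downarrow c=(a\Downarrow c)\Uparrow b$; (4) for all $a,b,c\in X$: $a\uparrow(b\uparrow c)=((a\Uparrow c)\uparrow b)\uparrow c$ and $a\downarrow(b\downarrow c)=((a\Downarrow c)\downarrow b)\downarrow c$.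
   Context: A biquandle is a set $B$ with two binary operations $\uparrow$ (up) and $\downarrow$ (down), $B$ closed under them, such that: (1) for every $a\in B$ the maps $f_a(x)=x\uparrow a$, $g_a(x)=x\downarrow a$ are bijections $B\to B$, and $S\colon B\times B\to B\times B$, $S(x,y)=(y\downarrow x,\ x\uparrow y)$, is a bijection; (2) for every $a\in B$, $f_a^{-1}(a)=a\downarrow f_a^{-1}(a)$ and $g_a^{-1}(a)=a\uparrow g_a^{-1}(a)$; (3) for all $a,b,c\in B$: $(a\uparrow b)\uparrow c=(a\uparrow(c\downarrow b))\uparrow(b\uparrow c)$; $(a\downarrow b)\uparrow(c\downarrow(b\uparrow a))=(a\uparrow c)\downarrow(b\uparrow(c\downarrow a))$; $(a\downarrow b)\downarrow c=(a\downarrow(c\uparrow b))\downarrow(b\downarrow c)$. The up-bar and down-bar operations $\Uparrow,\Downarrow$ are defined by $S^{-1}(a,b)=(b\Uparrow a,\ a\Downarrow b)$. *)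

theory Defs
  imports Main
begin

definition biS :: "('a \<Rightarrow> 'a \<Rightarrow> 'a) \<Rightarrow> ('a \<Rightarrow> 'a \<Rightarrow> 'a) \<Rightarrow> 'a \<times> 'a \<Rightarrow> 'a \<times> 'a" where
  "biS up dn = (\<lambda>(x, y). (dn y x, up x y))"

definition biquandle :: "'a set \<Rightarrow> ('a \<Rightarrow> 'a \<Rightarrow> 'a) \<Rightarrow> ('a \<Rightarrow> 'a \<Rightarrow> 'a) \<Rightarrow> bool" where
  "biquandle B up dn \<longleftrightarrow>
     (\<forall>a\<in>B. \<forall>b\<in>B. up a b \<in> B \<and> dn a b \<in> B) \<and>
     (\<forall>a\<in>B. bij_betw (\<lambda>x. up x a) B B) \<and>
     (\<forall>a\<in>B. bij_betw (\<lambda>x. dn x a) B B) \<and>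
     bij_betw (biS up dn) (B \<times> B) (B \<times> B) \<and>
     (\<forall>a\<in>B. the_inv_into B (\<lambda>x. up x a) a = dn a (the_inv_into B (\<lambda>x. up x a) a)) \<and>
     (\<forall>a\<in>B. the_inv_into B (\<lambda>x. dn x a) a = up a (the_inv_into B (\<lambda>x. dn x a) a)) \<and>
     (\<forall>a\<in>B. \<forall>b\<in>B. \<forall>c\<in>B.
        up (up a b) c = up (up a (dn c b)) (up b c) \<and>
        up (dn a b) (dn c (up b a)) = dn (up a c) (up b (dn c a)) \<and>
        dn (dn a b) c = dn (dn a (up c b)) (dn b c))"

text \<open>Up-bar and down-bar: S^{-1}(a,b) = (b \<Up> a, a \<Down> b).
  Hence a \<Up> b = fst (S^{-1}(b,a)) and a \<Down> b = snd (S^{-1}(a,b)).\<close>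

definition upbar :: "'a set \<Rightarrow> ('a \<Rightarrow> 'a \<Rightarrow> 'a) \<Rightarrow> ('a \<Rightarrow> 'a \<Rightarrow> 'a) \<Rightarrow> 'a \<Rightarrow> 'a \<Rightarrow> 'a" where
  "upbar B up dn a b = fst (the_inv_into (B \<times> B) (biS up dn) (b, a))"

definition dnbar :: "'a set \<Rightarrow> ('a \<Rightarrow> 'a \<Rightarrow> 'a) \<Rightarrow> ('a \<Rightarrow> 'a \<Rightarrow> 'a) \<Rightarrow> 'a \<Rightarrow> 'a \<Rightarrow> 'a" where
  "dnbar B up dn a b = snd (the_inv_into (B \<times> B) (biS up dn) (a, b))"

end

theory Submission
  imports Defs
begin

text \<open>Writing S and its inverse out componentwise gives identities such as
  b = dn (db b c) (ub c b) and x = ub (up x y) (dn y x). Feeding these into the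
  absorption hypotheses moves absorption from the plain to the barred operations and
  makes each barred operation a two-sided inverse of the plain one with the same second
  argument. With absorption, the second biquandle axiom collapses to the commutation
  of up with dn, and the first and third axioms to the distributivity laws.\<close>

locale biquandle_structure =
  fixes B :: "'a set" and up dn :: "'a \<Rightarrow> 'a \<Rightarrow> 'a"
  assumes biquandle: "biquandle B up dn"
begin

abbreviation ub where "ub \<equiv> upbar B up dn"
abbreviation db where "db \<equiv> dnbar B up dn"

lemma up_closed: "a \<in> B \<Longrightarrow> b \<in> B \<Longrightarrow> up a b \<in> B"
  and dn_closed: "a \<in> B \<Longrightarrow> b \<in> B \<Longrightarrow> dn a b \<in> B"
  using biquandle unfolding biquandle_def by blast+

lemma up_up_axiom: "a \<in> B \<Longrightarrow> b \<in> B \<Longrightarrow> c \<in> B \<Longrightarrow>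
    up (up a b) c = up (up a (dn c b)) (up b c)"
  and up_dn_axiom: "a \<in> B \<Longrightarrow> b \<in> B \<Longrightarrow> c \<in> B \<Longrightarrow>
    up (dn a b) (dn c (up b a)) = dn (up a c) (up b (dn c a))"
  and dn_dn_axiom: "a \<in> B \<Longrightarrow> b \<in> B \<Longrightarrow> c \<in> B \<Longrightarrow>
    dn (dn a b) c = dn (dn a (up c b)) (dn b c)"
  using biquandle unfolding biquandle_def by blast+

lemma biS_inj_on: "inj_on (biS up dn) (B \<times> B)"
  and biS_image: "biS up dn ` (B \<times> B) = B \<times> B"
  using biquandle unfolding biquandle_def bij_betw_def by blast+

lemma biS_inverse_closed: "a \<in> B \<Longrightarrow> b \<in> B \<Longrightarrow> the_inv_into (B \<times> B) (biS up dn) (a, b) \<in> B \<times> B"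
  using the_inv_into_into[OF biS_inj_on, of "(a, b)" "B \<times> B"] by (simp add: biS_image)

lemma upbar_closed: "a \<in> B \<Longrightarrow> b \<in> B \<Longrightarrow> ub a b \<in> B"
  and dnbar_closed: "a \<in> B \<Longrightarrow> b \<in> B \<Longrightarrow> db a b \<in> B"
  using biS_inverse_closed[of b a] biS_inverse_closed[of a b]
  by (auto simp: upbar_def dnbar_def mem_Times_iff)

lemma biS_biS_inverse:
  assumes "a \<in> B" "b \<in> B"
  shows "dn (db a b) (ub b a) = a" and "up (ub b a) (db a b) = b"
proof -
  have "biS up dn (ub b a, db a b) = (a, b)"
    using f_the_inv_into_f[OF biS_inj_on, of "(a, b)"] assms
    by (simp add: biS_image upbar_def dnbar_def)
  then show "dn (db a b) (ub b a) = a" and "up (ub b a) (db a b) = b"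
    by (simp_all add: biS_def)
qed

lemma biS_inverse_biS:
  assumes "x \<in> B" "y \<in> B"
  shows "ub (up x y) (dn y x) = x" and "db (dn y x) (up x y) = y"
proof -
  have "the_inv_into (B \<times> B) (biS up dn) (dn y x, up x y) = (x, y)"
    using the_inv_into_f_f[OF biS_inj_on, of "(x, y)"] assms by (simp add: biS_def)
  then show "ub (up x y) (dn y x) = x" and "db (dn y x) (up x y) = y"
    by (simp_all add: upbar_def dnbar_def)
qed

end

locale absorbing_biquandle = biquandle_structure +
  assumes up_dn_absorb: "\<And>a b c. a \<in> B \<Longrightarrow> b \<in> B \<Longrightarrow> c \<in> B \<Longrightarrow> up a (dn b c) = up a b"
    and upbar_dn_absorb: "\<And>a b c. a \<in> B \<Longrightarrow> b \<in> B \<Longrightarrow> c \<in> B \<Longrightarrow>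
      upbar B up dn a (dn b c) = upbar B up dn a b"
    and dn_up_absorb: "\<And>a b c. a \<in> B \<Longrightarrow> b \<in> B \<Longrightarrow> c \<in> B \<Longrightarrow> dn a (up b c) = dn a b"
    and dnbar_up_absorb: "\<And>a b c. a \<in> B \<Longrightarrow> b \<in> B \<Longrightarrow> c \<in> B \<Longrightarrow>
      dnbar B up dn a (up b c) = dnbar B up dn a b"
begin

lemma up_dnbar_absorb: "a \<in> B \<Longrightarrow> b \<in> B \<Longrightarrow> c \<in> B \<Longrightarrow> up a (db b c) = up a b"
  by (metis biS_biS_inverse(1) up_dn_absorb upbar_closed dnbar_closed)

lemma upbar_dnbar_absorb: "a \<in> B \<Longrightarrow> b \<in> B \<Longrightarrow> c \<in> B \<Longrightarrow> ub a (db b c) = ub a b"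
  by (metis biS_biS_inverse(1) upbar_dn_absorb upbar_closed dnbar_closed)

lemma dn_upbar_absorb: "a \<in> B \<Longrightarrow> b \<in> B \<Longrightarrow> c \<in> B \<Longrightarrow> dn a (ub b c) = dn a b"
  by (metis biS_biS_inverse(2) dn_up_absorb upbar_closed dnbar_closed)

lemma dnbar_upbar_absorb: "a \<in> B \<Longrightarrow> b \<in> B \<Longrightarrow> c \<in> B \<Longrightarrow> db a (ub b c) = db a b"
  by (metis biS_biS_inverse(2) dnbar_up_absorb upbar_closed dnbar_closed)

lemma upbar_up_cancel: "a \<in> B \<Longrightarrow> b \<in> B \<Longrightarrow> ub (up a b) b = a"
  by (metis biS_inverse_biS(1) upbar_dn_absorb up_closed dn_closed)

lemma dnbar_dn_cancel: "a \<in> B \<Longrightarrow> b \<in> B \<Longrightarrow> db (dn a b) b = a"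
  by (metis biS_inverse_biS(2) dnbar_up_absorb up_closed dn_closed)

lemma up_upbar_cancel: "a \<in> B \<Longrightarrow> b \<in> B \<Longrightarrow> up (ub a b) b = a"
  by (metis biS_biS_inverse(2) up_dnbar_absorb upbar_closed dnbar_closed)

lemma dn_dnbar_cancel: "a \<in> B \<Longrightarrow> b \<in> B \<Longrightarrow> dn (db a b) b = a"
  by (metis biS_biS_inverse(1) dn_upbar_absorb upbar_closed dnbar_closed)

lemma up_dn_commute: "a \<in> B \<Longrightarrow> b \<in> B \<Longrightarrow> c \<in> B \<Longrightarrow> dn (up a b) c = up (dn a c) b"
  using up_dn_axiom[of a c b] by (simp add: up_dn_absorb dn_up_absorb up_closed dn_closed)

text \<open>The remaining commutation laws are conjugates of the first one by the
  cancellation laws.\<close>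

lemma upbar_dn_commute:
  assumes "a \<in> B" "b \<in> B" "c \<in> B"
  shows "dn (ub a b) c = ub (dn a c) b"
proof -
  have x: "ub a b \<in> B" using assms upbar_closed by blast
  have "ub (dn a c) b = ub (dn (up (ub a b) b) c) b" using assms by (simp add: up_upbar_cancel)
  also have "\<dots> = dn (ub a b) c"
    using x assms by (simp add: up_dn_commute upbar_up_cancel dn_closed)
  finally show ?thesis by simp
qed

lemma up_dnbar_commute:
  assumes "a \<in> B" "b \<in> B" "c \<in> B"
  shows "db (up a b) c = up (db a c) b"
proof -
  have y: "db a c \<in> B" using assms dnbar_closed by blast
  have "db (up a b) c = db (up (dn (db a c) c) b) c" using assms by (simp add: dn_dnbar_cancel)
  also have "\<dots> = up (db a c) b"
    using y assms by (simp flip: up_dn_commute add: dnbar_dn_cancel up_closed)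
  finally show ?thesis .
qed

lemma upbar_dnbar_commute:
  assumes "a \<in> B" "b \<in> B" "c \<in> B"
  shows "db (ub a b) c = ub (db a c) b"
proof -
  define x where "x = ub (db a c) b"
  have x: "x \<in> B" using assms by (simp add: x_def upbar_closed dnbar_closed)
  have "up (dn x c) b = a"
    using assms x by (simp flip: up_dn_commute add: x_def up_upbar_cancel dn_dnbar_cancel dnbar_closed)
  then have "ub a b = dn x c" using assms x by (metis upbar_up_cancel dn_closed)
  then show ?thesis using assms x by (simp add: x_def dnbar_dn_cancel)
qed

lemma up_up_distrib: "a \<in> B \<Longrightarrow> b \<in> B \<Longrightarrow> c \<in> B \<Longrightarrow> up a (up b c) = up (up (ub a c) b) c"
  using up_up_axiom[of "ub a c" b c]
  by (simp add: up_dn_absorb up_upbar_cancel upbar_closed dn_closed)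

lemma dn_dn_distrib: "a \<in> B \<Longrightarrow> b \<in> B \<Longrightarrow> c \<in> B \<Longrightarrow> dn a (dn b c) = dn (dn (db a c) b) c"
  using dn_dn_axiom[of "db a c" b c]
  by (simp add: dn_up_absorb dn_dnbar_cancel dnbar_closed up_closed)

end

theorem mainTheorem8:
  fixes B :: "'a set" and up dn :: "'a \<Rightarrow> 'a \<Rightarrow> 'a"
  defines "ub \<equiv> upbar B up dn" and "db \<equiv> dnbar B up dn"
  assumes bq: "biquandle B up dn"
    and h1: "\<forall>a\<in>B. \<forall>b\<in>B. \<forall>c\<in>B. up a (dn b c) = up a b"
    and h2: "\<forall>a\<in>B. \<forall>b\<in>B. \<forall>c\<in>B. ub a (dn b c) = ub a b"
    and h3: "\<forall>a\<in>B. \<forall>b\<in>B. \<forall>c\<in>B. dn a (up b c) = dn a b"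
    and h4: "\<forall>a\<in>B. \<forall>b\<in>B. \<forall>c\<in>B. db a (up b c) = db a b"
  shows "(\<forall>a\<in>B. \<forall>b\<in>B. \<forall>c\<in>B.
            up a (dn b c) = up a (db b c) \<and> up a (db b c) = up a b \<and>
            ub a (dn b c) = ub a (db b c) \<and> ub a (db b c) = ub a b \<and>
            dn a (up b c) = dn a (ub b c) \<and> dn a (ub b c) = dn a b \<and>
            db a (up b c) = db a (ub b c) \<and> db a (ub b c) = db a b)
       \<and> (\<forall>a\<in>B. \<forall>b\<in>B.
            ub (up a b) b = a \<and> up (ub a b) b = a \<and>
            db (dn a b) b = a \<and> dn (db a b) b = a)
       \<and> (\<forall>a\<in>B. \<forall>b\<in>B. \<forall>c\<in>B.
            dn (up a b) c = up (dn a c) b \<and>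
            dn (ub a b) c = ub (dn a c) b \<and>
            db (up a b) c = up (db a c) b \<and>
            db (ub a b) c = ub (db a c) b)
       \<and> (\<forall>a\<in>B. \<forall>b\<in>B. \<forall>c\<in>B.
            up a (up b c) = up (up (ub a c) b) c \<and>
            dn a (dn b c) = dn (dn (db a c) b) c)"
proof -
  interpret absorbing_biquandle B up dn
    using bq h1 h2 h3 h4 unfolding ub_def db_def by unfold_locales blast+
  show ?thesis
    unfolding ub_def db_def
    by (simp add: up_dn_absorb upbar_dn_absorb dn_up_absorb dnbar_up_absorb
        up_dnbar_absorb upbar_dnbar_absorb dn_upbar_absorb dnbar_upbar_absorb
        upbar_up_cancel up_upbar_cancel dnbar_dn_cancel dn_dnbar_cancel
        up_dn_commute upbar_dn_commute up_dnbar_commute upbar_dnbar_commute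
        up_up_distrib dn_dn_distrib)
qed

end
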